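(* Let $X$ be a finite set, $k$ an integer with $1\le k\le|X|-1$, $\mathfrak{C}$ a nonempty symmetric family of choice functions for $\binom{X}{k}$, and $\mathcal{F}$ the set of (not necessarily simple) averaging functions for $\mathfrak{C}$. Suppose that for some $r\in\{3,\dots,k\}$ the following holds: for every $Y\in\binom{X}{k}$ and every one-to-one $\bar a\in Y^r$ there is $f\in\mathcal{F}_{[r]}$ with $f_Y(\bar a)=a_2$ and $f_Z(\bar b)=b_1$ for every $Z\in\binom{X}{k}$ with $Z\ne Y$ and every $\bar b\in Z^r$. Then $\mathfrak{C}$ is full, i.e. every choice function for $\binom{X}{k}$ belongs to $\mathfrak{C}$.
   Context: $\binom{X}{k}=\{Y\subseteq X:|Y|=k\}$; choice functions satisfy $c(Y)\in Y$. Symmetric: for every permutation $\pi$ of $X$ and $c\in\mathfrak{C}$, $(\pi*c)(Y)=\pi^{-1}(c(\pi(Y)))$ is in $\mathfrak{C}$. $\mathcal{F}_{[r]}$ is the set of families $f=\langle f_Y:Y\in\binom{X}{k}\rangle$ with $f_Y:Y^r\to Y$, $f_Y(x_1,\dots,x_r)\in\{x_1,\dots,x_r\}$, such that for all $c_1,\dots,c_r\in\mathfrak{C}$ the function $Y\mapsto f_Y(c_1(Y),\dots,c_r(Y))$ is in $\mathfrak{C}$. Standing assumption: every $f\in\mathcal{F}$ that is simple (i.e. $f_Y$ is the restriction to $Y^r$ of a single function independent of $Y$) is a monarchy (for some $t$, $f_Y(\bar x)=x_t$ for all $Y,\bar x$). *)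

theory Defs
  imports Main "HOL-Library.FuncSet" "HOL-Combinatorics.Permutations"
begin

definition ksets :: "'a set \<Rightarrow> nat \<Rightarrow> 'a set set" where
  "ksets X k = {Y. Y \<subseteq> X \<and> card Y = k}"

definition choice_funs :: "'a set \<Rightarrow> nat \<Rightarrow> ('a set \<Rightarrow> 'a) set" where
  "choice_funs X k = (\<Pi>\<^sub>E Y\<in>ksets X k. Y)"

definition perm_act :: "'a set \<Rightarrow> nat \<Rightarrow> ('a \<Rightarrow> 'a) \<Rightarrow> ('a set \<Rightarrow> 'a) \<Rightarrow> ('a set \<Rightarrow> 'a)" where
  "perm_act X k \<pi> c = (\<lambda>Y\<in>ksets X k. inv \<pi> (c (\<pi> ` Y)))"

definition symmetric_family :: "'a set \<Rightarrow> nat \<Rightarrow> ('a set \<Rightarrow> 'a) set \<Rightarrow> bool" where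
  "symmetric_family X k C \<longleftrightarrow>
     (\<forall>\<pi>. \<pi> permutes X \<longrightarrow> (\<forall>c\<in>C. perm_act X k \<pi> c \<in> C))"

text \<open>r-tuples from Y are functions on {..<r} (index i stands for x_{i+1}).
  A family f = <f_Y> is given as f :: 'a set => (nat => 'a) => 'a, where only
  the values f Y x with Y a k-subset and x in Y^r matter.\<close>
definition averaging_funs :: "'a set \<Rightarrow> nat \<Rightarrow> ('a set \<Rightarrow> 'a) set \<Rightarrow> nat
     \<Rightarrow> ('a set \<Rightarrow> (nat \<Rightarrow> 'a) \<Rightarrow> 'a) set" where
  "averaging_funs X k C r =
     {f. (\<forall>Y\<in>ksets X k. \<forall>x\<in>(\<Pi>\<^sub>E i\<in>{..<r}. Y). f Y x \<in> x ` {..<r}) \<and>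
         (\<forall>c. (\<forall>i<r. c i \<in> C) \<longrightarrow>
              (\<lambda>Y\<in>ksets X k. f Y (\<lambda>i\<in>{..<r}. c i Y)) \<in> C)}"

definition simple_fam :: "'a set \<Rightarrow> nat \<Rightarrow> nat \<Rightarrow> ('a set \<Rightarrow> (nat \<Rightarrow> 'a) \<Rightarrow> 'a) \<Rightarrow> bool" where
  "simple_fam X k r f \<longleftrightarrow>
     (\<exists>g. \<forall>Y\<in>ksets X k. \<forall>x\<in>(\<Pi>\<^sub>E i\<in>{..<r}. Y). f Y x = g x)"

definition monarchy :: "'a set \<Rightarrow> nat \<Rightarrow> nat \<Rightarrow> ('a set \<Rightarrow> (nat \<Rightarrow> 'a) \<Rightarrow> 'a) \<Rightarrow> bool" where
  "monarchy X k r f \<longleftrightarrow>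
     (\<exists>t<r. \<forall>Y\<in>ksets X k. \<forall>x\<in>(\<Pi>\<^sub>E i\<in>{..<r}. Y). f Y x = x t)"

end

theory Submission
  imports Defs
begin

text \<open>Given c in C, a k-set Y and a new value y in Y, take c_0 = c and, using the
  symmetry of C, further c_1, ..., c_(r-1) in C such that the tuple of their values at Y is
  one-to-one with second entry y. The averaging function that picks the second entry at Y
  and the first entry everywhere else maps (c_0, ..., c_(r-1)) to c(Y := y), so C is closed
  under changing a single value. As there are finitely many k-sets, every choice function
  is reached from any element of C.\<close>

lemma finite_ksets: "finite X \<Longrightarrow> finite (ksets X k)"
  unfolding ksets_def by (rule finite_subset[of _ "Pow X"]) auto

lemma PiE_eq_if_closed_under_upd:
  assumes I: "finite I" and C: "C \<subseteq> (\<Pi>\<^sub>E i\<in>I. A i)" and c0: "c0 \<in> C"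
    and upd: "\<And>c i x. c \<in> C \<Longrightarrow> i \<in> I \<Longrightarrow> x \<in> A i \<Longrightarrow> c(i := x) \<in> C"
  shows "C = (\<Pi>\<^sub>E i\<in>I. A i)"
proof
  show "(\<Pi>\<^sub>E i\<in>I. A i) \<subseteq> C"
  proof
    fix d assume d: "d \<in> (\<Pi>\<^sub>E i\<in>I. A i)"
    have "S \<subseteq> I \<Longrightarrow> (\<lambda>i. if i \<in> S then d i else c0 i) \<in> C" for S
      using finite_subset[OF _ I]
    proof (induction S rule: infinite_finite_induct)
      case (insert j S)
      then have "(\<lambda>i. if i \<in> S then d i else c0 i)(j := d j) \<in> C"
        using d by (intro upd) auto
      moreover have "(\<lambda>i. if i \<in> S then d i else c0 i)(j := d j)
          = (\<lambda>i. if i \<in> insert j S then d i else c0 i)"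
        by auto
      ultimately show ?case by simp
    qed (use c0 in auto)
    moreover have "c0 \<in> (\<Pi>\<^sub>E i\<in>I. A i)" using c0 C by blast
    then have "(\<lambda>i. if i \<in> I then d i else c0 i) = d"
      using d by (auto simp: PiE_def extensional_def)
    ultimately show "d \<in> C" by force
  qed
qed (fact C)

lemma inj_tuple_with_prefix:
  assumes "finite Y" "u \<in> Y" "v \<in> Y" "u \<noteq> v" "2 \<le> r" "r \<le> card Y"
  obtains a where "a \<in> (\<Pi>\<^sub>E i\<in>{..<r}. Y)" "inj_on a {..<r}" "a 0 = u" "a 1 = v"
proof -
  obtain xs where xs: "set xs = Y - {u, v}" "distinct xs"
    using finite_distinct_list[of "Y - {u, v}"] \<open>finite Y\<close> by auto
  define ys where "ys = u # v # xs"
  have ys: "set ys = Y" "distinct ys"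
    using xs assms(2-4) by (auto simp: ys_def)
  then have len: "r \<le> length ys"
    using \<open>r \<le> card Y\<close> distinct_card by fastforce
  show ?thesis
  proof
    show "restrict ((!) ys) {..<r} \<in> (\<Pi>\<^sub>E i\<in>{..<r}. Y)"
      using len ys(1) by auto
    show "inj_on (restrict ((!) ys) {..<r}) {..<r}"
      using inj_on_nth[OF ys(2), of "{..<r}"] len by (simp add: inj_on_def)
  qed (use \<open>2 \<le> r\<close> in \<open>auto simp: ys_def\<close>)
qed

lemma symmetric_family_attains_value:
  assumes C: "C \<subseteq> choice_funs X k" and sym: "symmetric_family X k C"
    and c: "c \<in> C" and Y: "Y \<in> ksets X k" and v: "v \<in> Y"
  obtains c' where "c' \<in> C" "c' Y = v"
proof
  have cY: "c Y \<in> Y" using C c Y unfolding choice_funs_def by auto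
  have "transpose (c Y) v permutes X"
    using cY v Y unfolding ksets_def by (intro permutes_swap_id) auto
  then show "perm_act X k (transpose (c Y) v) c \<in> C"
    using sym c unfolding symmetric_family_def by auto
  show "perm_act X k (transpose (c Y) v) c Y = v"
    using Y cY v unfolding perm_act_def by simp
qed

lemma averaging_fun_updates_first_argument:
  assumes f: "f \<in> averaging_funs X k C r" and C: "C \<subseteq> choice_funs X k"
    and Y: "Y \<in> ksets X k" and r: "0 < r"
    and a: "a \<in> (\<Pi>\<^sub>E i\<in>{..<r}. Y)" and fY: "f Y a = a 1"
    and f_other: "\<forall>Z\<in>ksets X k. Z \<noteq> Y \<longrightarrow> (\<forall>b\<in>(\<Pi>\<^sub>E i\<in>{..<r}. Z). f Z b = b 0)"
    and cs: "\<And>i. i < r \<Longrightarrow> cs i \<in> C" and cs_Y: "\<And>i. i < r \<Longrightarrow> cs i Y = a i"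
  shows "(cs 0)(Y := a 1) \<in> C"
proof -
  let ?g = "\<lambda>Z\<in>ksets X k. f Z (\<lambda>i\<in>{..<r}. cs i Z)"
  have "\<forall>i<r. cs i \<in> C" using cs by blast
  with f have "?g \<in> C" unfolding averaging_funs_def by blast
  moreover have "?g = (cs 0)(Y := a 1)"
  proof
    fix Z
    show "?g Z = ((cs 0)(Y := a 1)) Z"
    proof (cases "Z \<in> ksets X k")
      case False
      have "cs 0 \<in> choice_funs X k" using cs[OF r] C by blast
      then have "cs 0 Z = undefined"
        using False unfolding choice_funs_def by (rule PiE_arb)
      then show ?thesis using False Y by auto
    next
      case Z: True
      show ?thesis
      proof (cases "Z = Y")
        case True
        have "(\<lambda>i\<in>{..<r}. cs i Y) = a"
          using cs_Y a by (auto simp: PiE_def extensional_def)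
        then show ?thesis using True Z fY by simp
      next
        case False
        have "(\<lambda>i\<in>{..<r}. cs i Z) \<in> (\<Pi>\<^sub>E i\<in>{..<r}. Z)"
          using cs C Z unfolding choice_funs_def by auto
        then have "f Z (\<lambda>i\<in>{..<r}. cs i Z) = (\<lambda>i\<in>{..<r}. cs i Z) 0"
          using f_other Z False by blast
        then show ?thesis using Z False r by simp
      qed
    qed
  qed
  ultimately show ?thesis by simp
qed

lemma symmetric_family_closed_under_upd:
  assumes C: "C \<subseteq> choice_funs X k" and sym: "symmetric_family X k C"
    and r: "2 \<le> r" "r \<le> k"
    and hyp: "\<forall>Y\<in>ksets X k. \<forall>a\<in>(\<Pi>\<^sub>E i\<in>{..<r}. Y). inj_on a {..<r} \<longrightarrow>
               (\<exists>f\<in>averaging_funs X k C r.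
                  f Y a = a 1 \<and>
                  (\<forall>Z\<in>ksets X k. Z \<noteq> Y \<longrightarrow> (\<forall>b\<in>(\<Pi>\<^sub>E i\<in>{..<r}. Z). f Z b = b 0)))"
    and c: "c \<in> C" and Y: "Y \<in> ksets X k" and y: "y \<in> Y"
  shows "c(Y := y) \<in> C"
proof (cases "y = c Y")
  case True
  then show ?thesis using c by simp
next
  case False
  have "c \<in> choice_funs X k" using C c by blast
  then have cY: "c Y \<in> Y" using Y unfolding choice_funs_def by (rule PiE_mem)
  have rY: "r \<le> card Y" and "finite Y"
    using Y r card_ge_0_finite[of Y] unfolding ksets_def by auto
  have "c Y \<noteq> y" using False by simp
  then obtain a
    where a: "a \<in> (\<Pi>\<^sub>E i\<in>{..<r}. Y)" "inj_on a {..<r}" "a 0 = c Y" "a 1 = y"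
    by (rule inj_tuple_with_prefix[OF \<open>finite Y\<close> cY y _ r(1) rY])
  obtain f where f: "f \<in> averaging_funs X k C r" "f Y a = a 1"
    "\<forall>Z\<in>ksets X k. Z \<noteq> Y \<longrightarrow> (\<forall>b\<in>(\<Pi>\<^sub>E i\<in>{..<r}. Z). f Z b = b 0)"
    using hyp[rule_format, OF Y a(1,2)] by blast
  define cs where "cs i = (if i = 0 then c else SOME c'. c' \<in> C \<and> c' Y = a i)" for i
  have cs: "cs i \<in> C \<and> cs i Y = a i" if "i < r" for i
  proof (cases "i = 0")
    case False
    have "\<exists>c'. c' \<in> C \<and> c' Y = a i"
      using symmetric_family_attains_value[OF C sym c Y] a(1) that by blast
    then have "(SOME c'. c' \<in> C \<and> c' Y = a i) \<in> C \<and> (SOME c'. c' \<in> C \<and> c' Y = a i) Y = a i"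
      by (rule someI_ex)
    moreover have "cs i = (SOME c'. c' \<in> C \<and> c' Y = a i)" using False by (simp add: cs_def)
    ultimately show ?thesis by (simp only:)
  qed (use c a(3) cs_def in simp)
  have "(cs 0)(Y := a 1) \<in> C"
    using averaging_fun_updates_first_argument[OF f(1) C Y _ a(1) f(2,3)] cs r by simp
  then show ?thesis using a(4) by (simp add: cs_def)
qed

theorem claim14p4:
  fixes X :: "'a set" and k r :: nat and C :: "('a set \<Rightarrow> 'a) set"
  assumes "finite X"
    and "1 \<le> k" and "k \<le> card X - 1"
    and "C \<subseteq> choice_funs X k" and "C \<noteq> {}"
    and "symmetric_family X k C"
    and standing: "\<forall>s f. f \<in> averaging_funs X k C s \<and> simple_fam X k s f \<longrightarrow> monarchy X k s f"
    and "3 \<le> r" and "r \<le> k"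
    and hyp: "\<forall>Y\<in>ksets X k. \<forall>a\<in>(\<Pi>\<^sub>E i\<in>{..<r}. Y). inj_on a {..<r} \<longrightarrow>
               (\<exists>f\<in>averaging_funs X k C r.
                  f Y a = a 1 \<and>
                  (\<forall>Z\<in>ksets X k. Z \<noteq> Y \<longrightarrow> (\<forall>b\<in>(\<Pi>\<^sub>E i\<in>{..<r}. Z). f Z b = b 0)))"
  shows "C = choice_funs X k"
proof -
  obtain c0 where "c0 \<in> C" using \<open>C \<noteq> {}\<close> by blast
  have "C = (\<Pi>\<^sub>E Y\<in>ksets X k. Y)"
  proof (rule PiE_eq_if_closed_under_upd[OF finite_ksets[OF \<open>finite X\<close>] _ \<open>c0 \<in> C\<close>])
    show "C \<subseteq> (\<Pi>\<^sub>E Y\<in>ksets X k. Y)" using \<open>C \<subseteq> choice_funs X k\<close> by (simp add: choice_funs_def)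
    show "c(Y := y) \<in> C" if "c \<in> C" "Y \<in> ksets X k" "y \<in> Y" for c Y y
      using symmetric_family_closed_under_upd[OF \<open>C \<subseteq> choice_funs X k\<close> \<open>symmetric_family X k C\<close>
          _ \<open>r \<le> k\<close> hyp that] \<open>3 \<le> r\<close> by simp
  qed
  then show ?thesis by (simp add: choice_funs_def)
qed

end
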